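(* Let $\mathcal G$ be a core network with input nodes $\iota_1,\dots,\iota_n$ and output node $o$, and let $B_j$ be an appendage homeostasis block of $\langle H\rangle$, with associated subnetwork $\mathcal K_j$. Then: (a) each node in $\mathcal K_j$ is an absolutely appendage node; (b) for every $m=1,\dots,n$ and every $\iota_mo$-simple path $S$, nodes in $\mathcal K_j$ are not $CS$-path equivalent to any node in $CS\setminus\mathcal K_j$; (c) $\mathcal K_j$ is a path component of $\mathcal A_{\mathcal G}$.
   Context: Node $b$ is downstream from $a$ (and $a$ upstream from $b$) if there is a directed path from $a$ to $b$ (every node is up/downstream from itself). A core network: every node is upstream from $o$ and downstream from at least one input node. A simple path visits each node at most once; an $\iota_mo$-simple path is a simple path from $\iota_m$ to $o$. A node is $\iota_m$-simple if it lies on an $\iota_mo$-simple path, and $\iota_m$-appendage if it is downstream from $\iota_m$ but not $\iota_m$-simple; it is absolutely appendage if it is $\iota_m$-appendage for every $m$. $\mathcal A_{\mathcal G}$ is the subnetwork of all absolutely appendage nodes with all arrows of $\mathcal G$ between them. For a subnetwork $\mathcal K$, nodes $a,b$ are $\mathcal K$-path equivalent if there are paths within $\mathcal K$ from $a$ to $b$ and from $b$ to $a$; a $\mathcal K$-path component is an equivalence class. For an $\iota_mo$-simple path $S$, $CS$ is the subnetwork of all nodes of $\mathcal G$ not on $S$ with all arrows of $\mathcal G$ between them. An admissible system has variables $x_j$ per node with $\dot x_{\iota_m}=f_{\iota_m}(X,\mathcal I)$, $\dot x_j=f_j(X)$ otherwise, $f_{j,x_\ell}=\partial f_j/\partial x_\ell\equiv0$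 unless there is an arrow $\ell\to j$ (all nodes self-coupled), $f_{\iota_m,\mathcal I}\neq0$; these entries are treated as independent indeterminates. $J_{\mathcal K}=(f_{j,x_\ell})_{j,\ell\in\mathcal K}$. $\langle H\rangle$ is the Jacobian over all nodes (output last) with last column replaced by $(-f_{\iota_m,\mathcal I}$ in row $\iota_m$, $0$ elsewhere$)$. By Frobenius–König theory, $P\langle H\rangle Q$ is block upper triangular with square fully indecomposable diagonal blocks (irreducible determinants) for suitable permutation matrices $P,Q$. A diagonal block of order $k$ containing no $f_{\iota_m,\mathcal I}$ and exactly $k$ self-coupling entries $f_{\ell,x_\ell}$ is an appendage homeostasis block; such a block, after permuting rows and columns, equals $J_{\mathcal K}$ for the set $\mathcal K$ of nodes indexing its rows, which is its associated subnetwork. *)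

theory Defs
  imports Main
begin

text \<open>A network: finite node set V, arrows E (pairs (a,b) meaning a -> b), a nonempty
  set I of input nodes and an output node out.\<close>

definition network :: "'v set \<Rightarrow> ('v \<times> 'v) set \<Rightarrow> 'v set \<Rightarrow> 'v \<Rightarrow> bool" where
  "network V E I out \<longleftrightarrow> finite V \<and> E \<subseteq> V \<times> V \<and> I \<subseteq> V \<and> I \<noteq> {} \<and> out \<in> V \<and> out \<notin> I"

definition downstream :: "('v \<times> 'v) set \<Rightarrow> 'v \<Rightarrow> 'v \<Rightarrow> bool" where
  "downstream E a b \<longleftrightarrow> (a, b) \<in> E\<^sup>*"

definition core_network :: "'v set \<Rightarrow> ('v \<times> 'v) set \<Rightarrow> 'v set \<Rightarrow> 'v \<Rightarrow> bool" where
  "core_network V E I out \<longleftrightarrow> network V E I out \<and>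
     (\<forall>v\<in>V. downstream E v out \<and> (\<exists>i\<in>I. downstream E i v))"

definition simple_path :: "('v \<times> 'v) set \<Rightarrow> 'v list \<Rightarrow> 'v \<Rightarrow> 'v \<Rightarrow> bool" where
  "simple_path E S a b \<longleftrightarrow> S \<noteq> [] \<and> hd S = a \<and> last S = b \<and> distinct S \<and>
     (\<forall>k. Suc k < length S \<longrightarrow> (S ! k, S ! Suc k) \<in> E)"

definition input_simple :: "('v \<times> 'v) set \<Rightarrow> 'v \<Rightarrow> 'v \<Rightarrow> 'v \<Rightarrow> bool" where
  "input_simple E out i v \<longleftrightarrow> (\<exists>S. simple_path E S i out \<and> v \<in> set S)"

definition input_appendage :: "('v \<times> 'v) set \<Rightarrow> 'v \<Rightarrow> 'v \<Rightarrow> 'v \<Rightarrow> bool" where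
  "input_appendage E out i v \<longleftrightarrow> downstream E i v \<and> \<not> input_simple E out i v"

definition absolutely_appendage ::
  "'v set \<Rightarrow> ('v \<times> 'v) set \<Rightarrow> 'v set \<Rightarrow> 'v \<Rightarrow> 'v \<Rightarrow> bool" where
  "absolutely_appendage V E I out v \<longleftrightarrow> v \<in> V \<and> (\<forall>i\<in>I. input_appendage E out i v)"

text \<open>Node set of the subnetwork A_G (its arrows are all arrows of E between these nodes).\<close>
definition appendage_nodes :: "'v set \<Rightarrow> ('v \<times> 'v) set \<Rightarrow> 'v set \<Rightarrow> 'v \<Rightarrow> 'v set" where
  "appendage_nodes V E I out = {v. absolutely_appendage V E I out v}"

definition path_within :: "('v \<times> 'v) set \<Rightarrow> 'v set \<Rightarrow> 'v \<Rightarrow> 'v \<Rightarrow> bool" where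
  "path_within E K a b \<longleftrightarrow> a \<in> K \<and> b \<in> K \<and> (a, b) \<in> (E \<inter> (K \<times> K))\<^sup>*"

definition path_equivalent :: "('v \<times> 'v) set \<Rightarrow> 'v set \<Rightarrow> 'v \<Rightarrow> 'v \<Rightarrow> bool" where
  "path_equivalent E K a b \<longleftrightarrow> path_within E K a b \<and> path_within E K b a"

definition path_component :: "('v \<times> 'v) set \<Rightarrow> 'v set \<Rightarrow> 'v set \<Rightarrow> bool" where
  "path_component E K C \<longleftrightarrow> (\<exists>a\<in>K. C = {b. path_equivalent E K a b})"

definition compl_nodes :: "'v set \<Rightarrow> 'v list \<Rightarrow> 'v set" where
  "compl_nodes V S = V - set S"

text \<open>Entries of the matrix <H>, as independent indeterminates:
  Jac j l stands for f_{j,x_l}, Inp i for f_{i,I}, Zero for the zero entry.\<close>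
datatype 'v entry = Jac 'v 'v | Inp 'v | Zero

text \<open>Entry in row j, column l of <H> (columns indexed by nodes; the output column is replaced).\<close>
definition H_entry :: "('v \<times> 'v) set \<Rightarrow> 'v set \<Rightarrow> 'v \<Rightarrow> 'v \<Rightarrow> 'v \<Rightarrow> 'v entry" where
  "H_entry E I out j l =
     (if l = out then (if j \<in> I then Inp j else Zero)
      else if (l, j) \<in> E \<or> l = j then Jac j l else Zero)"

definition fully_indecomposable :: "('v \<Rightarrow> 'v \<Rightarrow> 'v entry) \<Rightarrow> 'v set \<Rightarrow> 'v set \<Rightarrow> bool" where
  "fully_indecomposable M R C \<longleftrightarrow> R \<noteq> {} \<and> card R = card C \<and>
     (\<forall>X Y. X \<subseteq> R \<and> Y \<subseteq> C \<and> X \<noteq> {} \<and> Y \<noteq> {} \<and> card X + card Y \<ge> card R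
        \<longrightarrow> (\<exists>x\<in>X. \<exists>y\<in>Y. M x y \<noteq> Zero))"

text \<open>A Frobenius--Koenig decomposition P M Q of M (rows and columns indexed by V):
  an ordered list of diagonal blocks (row set, column set) partitioning rows and columns,
  each fully indecomposable, all entries below the block diagonal zero.\<close>
definition FK_decomposition ::
  "'v set \<Rightarrow> ('v \<Rightarrow> 'v \<Rightarrow> 'v entry) \<Rightarrow> ('v set \<times> 'v set) list \<Rightarrow> bool" where
  "FK_decomposition V M bs \<longleftrightarrow>
     (\<Union>b\<in>set bs. fst b) = V \<and> (\<Union>b\<in>set bs. snd b) = V \<and>
     (\<forall>i j. i < j \<and> j < length bs \<longrightarrow>
        fst (bs ! i) \<inter> fst (bs ! j) = {} \<and> snd (bs ! i) \<inter> snd (bs ! j) = {}) \<and>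
     (\<forall>b\<in>set bs. fully_indecomposable M (fst b) (snd b)) \<and>
     (\<forall>i k. k < i \<and> i < length bs \<longrightarrow>
        (\<forall>r\<in>fst (bs ! i). \<forall>c\<in>snd (bs ! k). M r c = Zero))"

definition appendage_block ::
  "('v \<times> 'v) set \<Rightarrow> 'v set \<Rightarrow> 'v \<Rightarrow> 'v set \<Rightarrow> 'v set \<Rightarrow> bool" where
  "appendage_block E I out R C \<longleftrightarrow>
     (\<forall>r\<in>R. \<forall>c\<in>C. \<forall>i. H_entry E I out r c \<noteq> Inp i) \<and>
     card {l. l \<in> R \<and> l \<in> C \<and> H_entry E I out l l = Jac l l} = card R"

end

theory Submission
  imports Defs "HOL-Combinatorics.Cycles"
begin

text \<open>A permutation \<open>\<sigma>\<close> of the nodes with all entries \<open>\<langle>H\<rangle>(r, \<sigma> r)\<close> nonzero (a term of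
  \<open>det \<langle>H\<rangle>\<close>) maps the rows of every diagonal block of a Frobenius--Koenig decomposition
  into its columns. An appendage block has equal row and column sets \<open>K\<close> with \<open>o \<notin> K\<close>, so
  such \<open>\<sigma>\<close> preserve \<open>K\<close>. Shifting backwards along an \<open>\<iota>o\<close>-simple path, whose cycle is closed
  by the input entry at \<open>(\<iota>, o)\<close>, and around a disjoint cycle, with self-couplings
  elsewhere, gives such a \<open>\<sigma>\<close>. Hence no \<open>\<iota>o\<close>-simple path meets \<open>K\<close>, and no arrow
  \<open>x \<rightarrow> y\<close> entering \<open>K\<close> lies on a cycle avoiding an \<open>\<iota>o\<close>-simple path, as then \<open>\<sigma> y = x\<close>.
  Such an entering arrow on some cycle exists, for otherwise an input reaching \<open>K\<close> would
  have a simple path to \<open>o\<close> through \<open>K\<close>. Together with the strong connectivity of \<open>K\<close>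
  coming from full indecomposability, this gives (a)--(c).\<close>

section \<open>Simple paths\<close>

lemma simple_path_iff_successively:
  "simple_path E S a b \<longleftrightarrow>
     S \<noteq> [] \<and> hd S = a \<and> last S = b \<and> distinct S \<and> successively (\<lambda>x y. (x, y) \<in> E) S"
  by (simp add: simple_path_def successively_conv_nth)

lemma successively_rtrancl:
  assumes "successively (\<lambda>x y. (x, y) \<in> E) S" and "x \<in> set S"
  shows "(hd S, x) \<in> E\<^sup>* \<and> (x, last S) \<in> E\<^sup>*"
  using assms
proof (induction S arbitrary: x rule: induct_list012)
  case (3 y z S)
  then have edge: "(y, z) \<in> E" and tail: "(z, last (z # S)) \<in> E\<^sup>*"
    by auto
  show ?case
  proof (cases "x = y")
    case True
    then show ?thesis using edge tail by (auto intro: converse_rtrancl_into_rtrancl)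
  next
    case False
    then show ?thesis using 3 edge by (auto intro: converse_rtrancl_into_rtrancl)
  qed
qed auto

lemma simple_path_rtrancl:
  "simple_path E S a b \<Longrightarrow> x \<in> set S \<Longrightarrow> (a, x) \<in> E\<^sup>* \<and> (x, b) \<in> E\<^sup>*"
  unfolding simple_path_iff_successively using successively_rtrancl by metis

lemma simple_path_append:
  "simple_path E A a x \<Longrightarrow> simple_path E B y b \<Longrightarrow> (x, y) \<in> E \<Longrightarrow> set A \<inter> set B = {} \<Longrightarrow>
   simple_path E (A @ B) a b"
  unfolding simple_path_iff_successively by (auto simp: successively_append_iff)

lemma path_within_imp_simple_path:
  assumes "path_within E K a b"
  shows "\<exists>S. simple_path E S a b \<and> set S \<subseteq> K"
proof -
  have "(a, b) \<in> (E \<inter> K \<times> K)\<^sup>*" and "a \<in> K"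
    using assms by (auto simp: path_within_def)
  then show ?thesis
  proof (induction rule: converse_rtrancl_induct)
    case base
    then show ?case by (auto simp: simple_path_iff_successively)
  next
    case (step a c)
    then obtain S where S: "simple_path E S c b" "set S \<subseteq> K" by auto
    show ?case
    proof (cases "a \<in> set S")
      case True
      then obtain xs ys where S_split: "S = xs @ a # ys" by (metis split_list)
      have "simple_path E (a # ys) a b"
        using S(1) unfolding S_split simple_path_iff_successively
        by (auto simp: successively_append_iff)
      then show ?thesis using S(2) S_split by (intro exI[of _ "a # ys"]) auto
    next
      case False
      then have "simple_path E (a # S) a b"
        using S(1) step(1) by (auto simp: simple_path_iff_successively successively_Cons)
      then show ?thesis using S(2) step(4) by (intro exI[of _ "a # S"]) auto
    qed
  qed
qed

lemma rtrancl_imp_simple_path: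
  "(a, b) \<in> E\<^sup>* \<Longrightarrow> \<exists>S. simple_path E S a b"
  using path_within_imp_simple_path[of E UNIV a b] by (auto simp: path_within_def)

lemma path_within_mono:
  "K \<subseteq> K' \<Longrightarrow> path_within E K a b \<Longrightarrow> path_within E K' a b"
  unfolding path_within_def using rtrancl_mono[of "E \<inter> K \<times> K" "E \<inter> K' \<times> K'"] by blast

lemma path_within_trans:
  "path_within E K a b \<Longrightarrow> path_within E K b c \<Longrightarrow> path_within E K a c"
  unfolding path_within_def by (meson rtrancl_trans)

lemma path_within_rtrancl: "path_within E K a b \<Longrightarrow> (a, b) \<in> E\<^sup>*"
  unfolding path_within_def using rtrancl_mono[of "E \<inter> K \<times> K" E] by blast

lemma path_equivalent_mono:
  "K \<subseteq> K' \<Longrightarrow> path_equivalent E K a b \<Longrightarrow> path_equivalent E K' a b"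
  unfolding path_equivalent_def using path_within_mono by metis

lemma appendage_nodes_subset_compl_nodes:
  "i \<in> I \<Longrightarrow> simple_path E S i out \<Longrightarrow> appendage_nodes V E I out \<subseteq> compl_nodes V S"
  by (auto simp: appendage_nodes_def absolutely_appendage_def input_appendage_def
      input_simple_def compl_nodes_def)

lemma path_within_upstream:
  assumes "(y, x) \<in> E\<^sup>*" and "\<And>z. (z, x) \<in> E\<^sup>* \<Longrightarrow> z \<in> K"
  shows "path_within E K y x"
proof -
  have "(y, x) \<in> (E \<inter> K \<times> K)\<^sup>*"
    using assms
  proof (induction rule: converse_rtrancl_induct)
    case (step y y')
    then have "(y, y') \<in> E \<inter> K \<times> K"
      by (meson IntI SigmaI converse_rtrancl_into_rtrancl)
    then show ?case using step by (meson converse_rtrancl_into_rtrancl)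
  qed simp
  then show ?thesis using assms by (auto simp: path_within_def)
qed

lemma rtrancl_crossing_edge:
  "(a, b) \<in> r\<^sup>* \<Longrightarrow> a \<notin> R \<Longrightarrow> b \<in> R \<Longrightarrow> \<exists>x y. (a, x) \<in> r\<^sup>* \<and> (x, y) \<in> r \<and> x \<notin> R \<and> y \<in> R"
proof (induction rule: rtrancl_induct)
  case (step b' b)
  then show ?case by (cases "b' \<in> R") auto
qed simp

section \<open>Backward cyclic shifts along lists\<close>

lemma cycle_of_list_nth:
  assumes "distinct cs" and "j < length cs"
  shows "cycle_of_list cs (cs ! j) = cs ! (Suc j mod length cs)"
proof -
  have "map (cycle_of_list cs) cs = rotate1 cs"
    using cyclic_rotation[OF assms(1), of 1] by simp
  then show ?thesis using assms(2) by (metis nth_map nth_rotate1)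
qed

lemma cycle_of_list_rev_Suc:
  assumes "distinct L" and "Suc k < length L"
  shows "cycle_of_list (rev L) (L ! Suc k) = L ! k"
proof -
  let ?n = "length L"
  have "L ! Suc k = rev L ! (?n - 2 - k)" and "L ! k = rev L ! (Suc (?n - 2 - k) mod ?n)"
    using assms(2) by (simp_all add: rev_nth Suc_diff_Suc)
  then show ?thesis using assms cycle_of_list_nth[of "rev L" "?n - 2 - k"] by simp
qed

lemma cycle_of_list_rev_hd:
  assumes "distinct L" and "L \<noteq> []"
  shows "cycle_of_list (rev L) (hd L) = last L"
proof -
  let ?n = "length L"
  have "hd L = rev L ! (?n - 1)" and "last L = rev L ! (Suc (?n - 1) mod ?n)"
    using assms(2) by (simp_all add: rev_nth hd_conv_nth last_conv_nth)
  then show ?thesis using assms cycle_of_list_nth[of "rev L" "?n - 1"] by simp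
qed

lemma cycle_of_list_rev_edge:
  assumes "distinct L" and "successively (\<lambda>x y. (x, y) \<in> E) L"
    and "r \<in> set L" and "r \<noteq> hd L"
  shows "(cycle_of_list (rev L) r, r) \<in> E"
proof -
  obtain j where j: "j < length L" "r = L ! j" using assms(3) by (metis in_set_conv_nth)
  then obtain k where "j = Suc k"
    using assms(4) by (metis hd_conv_nth list.size(3) not0_implies_Suc not_less0)
  then show ?thesis
    using j cycle_of_list_rev_Suc[OF assms(1)] successively_nth[OF assms(2)] by auto
qed

section \<open>Transversals of a Frobenius--Koenig decomposition\<close>

definition transversal :: "('v \<Rightarrow> 'v \<Rightarrow> 'v entry) \<Rightarrow> 'v set \<Rightarrow> ('v \<Rightarrow> 'v) \<Rightarrow> bool" where
  "transversal M V \<sigma> \<longleftrightarrow> \<sigma> permutes V \<and> (\<forall>r\<in>V. M r (\<sigma> r) \<noteq> Zero)"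

definition block_rows_from :: "('v set \<times> 'v set) list \<Rightarrow> nat \<Rightarrow> 'v set" where
  "block_rows_from bs j = (\<Union>l\<in>{j..<length bs}. fst (bs ! l))"

definition block_cols_from :: "('v set \<times> 'v set) list \<Rightarrow> nat \<Rightarrow> 'v set" where
  "block_cols_from bs j = (\<Union>l\<in>{j..<length bs}. snd (bs ! l))"

context
  fixes V :: "'v set" and M bs
  assumes finite_V: "finite V" and FK: "FK_decomposition V M bs"
begin

lemma FK_blocks_subset:
  assumes "(R, C) \<in> set bs"
  shows "R \<subseteq> V \<and> C \<subseteq> V"
proof -
  have "(\<Union>b\<in>set bs. fst b) = V" and "(\<Union>b\<in>set bs. snd b) = V"
    using FK by (simp_all add: FK_decomposition_def)
  then show ?thesis using assms by (metis UN_upper fst_conv snd_conv)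
qed

lemma FK_block_fully_indecomposable: "(R, C) \<in> set bs \<Longrightarrow> fully_indecomposable M R C"
  using FK unfolding FK_decomposition_def by (metis fst_conv snd_conv)

lemma FK_blocks_disjoint:
  assumes "l < length bs" and "l' < length bs" and "l \<noteq> l'"
  shows "fst (bs ! l) \<inter> fst (bs ! l') = {} \<and> snd (bs ! l) \<inter> snd (bs ! l') = {}"
proof (cases "l < l'")
  case True
  then show ?thesis using assms FK unfolding FK_decomposition_def by blast
next
  case False
  then have "l' < l" using assms(3) by simp
  then show ?thesis using assms FK unfolding FK_decomposition_def by (metis Int_commute)
qed

lemma FK_card_rows_eq_cols_from: "card (block_rows_from bs j) = card (block_cols_from bs j)"
proof -
  have finite_blocks: "finite (fst (bs ! l))" "finite (snd (bs ! l))" if "l < length bs" for l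
    using that FK_blocks_subset[of "fst (bs ! l)" "snd (bs ! l)"] finite_V
    by (auto intro: finite_subset)
  have "card (block_rows_from bs j) = (\<Sum>l\<in>{j..<length bs}. card (fst (bs ! l)))"
    unfolding block_rows_from_def using finite_blocks FK_blocks_disjoint
    by (intro card_UN_disjoint) auto
  also have "\<dots> = (\<Sum>l\<in>{j..<length bs}. card (snd (bs ! l)))"
    using FK_block_fully_indecomposable by (intro sum.cong) (auto simp: fully_indecomposable_def)
  also have "\<dots> = card (block_cols_from bs j)"
    unfolding block_cols_from_def using finite_blocks FK_blocks_disjoint
    by (intro card_UN_disjoint[symmetric]) auto
  finally show ?thesis .
qed

lemma FK_transversal_rows_from:
  assumes "transversal M V \<sigma>" and "x \<in> block_rows_from bs j"
  shows "\<sigma> x \<in> block_cols_from bs j"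
proof -
  obtain l where l: "j \<le> l" "l < length bs" "x \<in> fst (bs ! l)"
    using assms(2) by (auto simp: block_rows_from_def)
  then have "x \<in> V" using FK_blocks_subset[of "fst (bs ! l)" "snd (bs ! l)"] by auto
  then have nonzero: "M x (\<sigma> x) \<noteq> Zero" and "\<sigma> x \<in> V"
    using assms(1) by (auto simp: transversal_def permutes_in_image)
  moreover have "(\<Union>b\<in>set bs. snd b) = V"
    using FK by (simp add: FK_decomposition_def)
  ultimately obtain l' where l': "l' < length bs" "\<sigma> x \<in> snd (bs ! l')"
    by (metis UN_E in_set_conv_nth)
  have "\<not> l' < l"
  proof
    assume "l' < l"
    then have "M x (\<sigma> x) = Zero"
      using FK l l' unfolding FK_decomposition_def by blast
    then show False using nonzero by simp
  qed
  then show ?thesis using l l' by (auto simp: block_cols_from_def)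
qed

text \<open>The rows of the blocks from \<open>j\<close> on go to columns of these blocks, and both sets have
  the same size; so a row of block \<open>j\<close> cannot go to a later block.\<close>

lemma FK_transversal_preserves_block:
  assumes \<sigma>: "transversal M V \<sigma>" and "(R, C) \<in> set bs" and "r \<in> R"
  shows "\<sigma> r \<in> C"
proof -
  obtain k where k: "k < length bs" "bs ! k = (R, C)"
    using assms(2) by (metis in_set_conv_nth)
  have inj: "inj \<sigma>" using \<sigma> unfolding transversal_def by (metis permutes_inj)
  have "block_cols_from bs (Suc k) \<subseteq> V"
    unfolding block_cols_from_def using FK_blocks_subset
    by (metis (no_types, lifting) UN_least atLeastLessThan_iff nth_mem prod.collapse)
  then have later: "\<sigma> ` block_rows_from bs (Suc k) = block_cols_from bs (Suc k)"
    using FK_transversal_rows_from[OF \<sigma>] FK_card_rows_eq_cols_from finite_V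
      card_image[OF inj_on_subset[OF inj subset_UNIV]]
    by (intro card_subset_eq) (auto intro: finite_subset)
  have "r \<in> block_rows_from bs k" using k assms(3) by (force simp: block_rows_from_def)
  then obtain l where l: "k \<le> l" "l < length bs" "\<sigma> r \<in> snd (bs ! l)"
    using FK_transversal_rows_from[OF \<sigma>] unfolding block_cols_from_def by fastforce
  have "r \<notin> block_rows_from bs (Suc k)"
    using FK_blocks_disjoint[of k] k assms(3) by (fastforce simp: block_rows_from_def)
  then have "\<sigma> r \<notin> block_cols_from bs (Suc k)"
    using later inj by (metis inj_image_mem_iff)
  then have "l = k" using l by (auto simp: block_cols_from_def)
  then show ?thesis using l k by simp
qed

end

section \<open>The matrix \<open>\<langle>H\<rangle>\<close>\<close>

lemma H_entry_transversal:
  assumes Q: "simple_path E Q i out" and "i \<in> I" and "set Q \<subseteq> V"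
    and Z: "distinct Z" "successively (\<lambda>x y. (x, y) \<in> E) Z" "Z \<noteq> [] \<Longrightarrow> (last Z, hd Z) \<in> E"
    and Z_V: "set Z \<subseteq> V - set Q"
  shows "transversal (H_entry E I out) V (cycle_of_list (rev Q) \<circ> cycle_of_list (rev Z))"
proof -
  let ?\<sigma>Q = "cycle_of_list (rev Q)" and ?\<sigma>Z = "cycle_of_list (rev Z)"
  have Q': "Q \<noteq> []" "hd Q = i" "last Q = out" "distinct Q" "successively (\<lambda>x y. (x, y) \<in> E) Q"
    using Q by (auto simp: simple_path_iff_successively)
  have \<sigma>Q: "?\<sigma>Q permutes set Q" and \<sigma>Z: "?\<sigma>Z permutes set Z"
    using cycle_permutes[of "rev Q"] cycle_permutes[of "rev Z"] by simp_all
  have "(?\<sigma>Q \<circ> ?\<sigma>Z) permutes V"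
    using assms \<sigma>Q \<sigma>Z by (metis Diff_subset order_trans permutes_compose permutes_subset)
  moreover have "H_entry E I out r ((?\<sigma>Q \<circ> ?\<sigma>Z) r) \<noteq> Zero" if "r \<in> V" for r
  proof (cases "r \<in> set Z")
    case True
    then have "?\<sigma>Z r \<in> set Z" using \<sigma>Z by (simp add: permutes_in_image)
    then have "(?\<sigma>Q \<circ> ?\<sigma>Z) r = ?\<sigma>Z r" and "?\<sigma>Z r \<noteq> out"
      using Z_V Q' by (auto simp: id_outside_supp)
    moreover have "(?\<sigma>Z r, r) \<in> E"
    proof -
      have "Z \<noteq> []" using True by auto
      then show ?thesis
        using Z cycle_of_list_rev_edge[OF Z(1,2) True] cycle_of_list_rev_hd[OF Z(1)]
        by (cases "r = hd Z") auto
    qed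
    ultimately show ?thesis using True by (simp add: H_entry_def)
  next
    case r_notin_Z: False
    then have \<sigma>_r: "(?\<sigma>Q \<circ> ?\<sigma>Z) r = ?\<sigma>Q r" by (simp add: id_outside_supp)
    consider "r = i" | "r \<in> set Q" "r \<noteq> i" | "r \<notin> set Q" by blast
    then show ?thesis
    proof cases
      case 1
      then show ?thesis using \<sigma>_r cycle_of_list_rev_hd[OF Q'(4,1)] Q' assms(2)
        by (simp add: H_entry_def)
    next
      case 2
      have "?\<sigma>Q r \<noteq> ?\<sigma>Q i" using 2 \<sigma>Q by (metis permutes_inj injD)
      then have "?\<sigma>Q r \<noteq> out" using cycle_of_list_rev_hd[OF Q'(4,1)] Q' by simp
      then show ?thesis
        using 2 \<sigma>_r cycle_of_list_rev_edge[OF Q'(4,5)] Q' by (simp add: H_entry_def)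
    next
      case 3
      then show ?thesis using \<sigma>_r Q' by (auto simp: H_entry_def id_outside_supp)
    qed
  qed
  ultimately show ?thesis by (simp add: transversal_def)
qed

lemma H_entry_fully_indecomposable_connected:
  assumes "finite R" and "out \<notin> R" and fi: "fully_indecomposable (H_entry E I out) R R"
    and "a \<in> R" and "b \<in> R"
  shows "(a, b) \<in> (E \<inter> R \<times> R)\<^sup>*"
proof (rule ccontr)
  assume not_reached: "(a, b) \<notin> (E \<inter> R \<times> R)\<^sup>*"
  define Y where "Y = {y \<in> R. (a, y) \<in> (E \<inter> R \<times> R)\<^sup>*}"
  define X where "X = R - Y"
  have XY: "X \<subseteq> R" "Y \<subseteq> R" "X \<noteq> {}" "Y \<noteq> {}"
    using assms not_reached by (auto simp: X_def Y_def)
  have "card X + card Y = card R"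
    unfolding X_def using XY(2) assms(1)
    by (metis card_Diff_subset card_mono finite_subset le_add_diff_inverse2)
  then obtain x y where xy: "x \<in> X" "y \<in> Y" "H_entry E I out x y \<noteq> Zero"
    using fi XY unfolding fully_indecomposable_def by (metis order_refl)
  then have "(y, x) \<in> E"
    using XY assms(2) by (auto simp: H_entry_def X_def split: if_splits)
  then have "x \<in> Y" using xy XY unfolding Y_def by (blast intro: rtrancl_into_rtrancl)
  then show False using xy(1) by (simp add: X_def)
qed

lemma appendage_block_square:
  assumes "finite V" and FK: "FK_decomposition V (H_entry E I out) bs"
    and RC: "(R, C) \<in> set bs" and "appendage_block E I out R C"
  shows "R = C \<and> out \<notin> R"
proof -
  let ?W = "{l. l \<in> R \<and> l \<in> C \<and> H_entry E I out l l = Jac l l}"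
  have R_C: "R \<subseteq> V" "C \<subseteq> V" using FK_blocks_subset[OF assms(1) FK RC] by auto
  have "?W = R"
    using assms R_C by (intro card_subset_eq) (auto simp: appendage_block_def intro: finite_subset)
  moreover have "H_entry E I out out out \<noteq> Jac out out" by (simp add: H_entry_def)
  ultimately have "R \<subseteq> C" and "out \<notin> R" by blast+
  moreover have "card R = card C"
    using FK_block_fully_indecomposable[OF assms(1) FK RC] by (simp add: fully_indecomposable_def)
  ultimately show ?thesis using R_C assms(1) by (metis card_subset_eq finite_subset)
qed

section \<open>Appendage homeostasis blocks\<close>

text \<open>By \<open>appendage_block_square\<close>, an appendage block is a diagonal block \<open>(R, R)\<close> with
  \<open>out \<notin> R\<close>; this is the form assumed here.\<close>

locale appendage_homeostasis_block =
  fixes V :: "'v set" and E :: "('v \<times> 'v) set" and I :: "'v set" and out :: 'v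
    and bs :: "('v set \<times> 'v set) list" and R :: "'v set"
  assumes core: "core_network V E I out"
    and FK: "FK_decomposition V (H_entry E I out) bs"
    and block: "(R, R) \<in> set bs"
    and out_notin_block: "out \<notin> R"
begin

lemma finite_V: "finite V" and E_subset: "E \<subseteq> V \<times> V" and I_subset: "I \<subseteq> V"
    and I_nonempty: "I \<noteq> {}"
  using core by (auto simp: core_network_def network_def)

lemma reaches_out: "v \<in> V \<Longrightarrow> (v, out) \<in> E\<^sup>*"
  using core by (auto simp: core_network_def downstream_def)

lemma reached_from_input: "v \<in> V \<Longrightarrow> \<exists>i\<in>I. (i, v) \<in> E\<^sup>*"
  using core by (auto simp: core_network_def downstream_def)

lemma upstream_in_V: "(z, x) \<in> E\<^sup>* \<Longrightarrow> x \<in> V \<Longrightarrow> z \<in> V"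
  by (induction rule: converse_rtrancl_induct) (use E_subset in auto)

lemma downstream_in_V: "(x, z) \<in> E\<^sup>* \<Longrightarrow> x \<in> V \<Longrightarrow> z \<in> V"
  by (induction rule: rtrancl_induct) (use E_subset in auto)

lemma block_subset: "R \<subseteq> V" and block_nonempty: "R \<noteq> {}"
  using FK_blocks_subset[OF finite_V FK block]
    FK_block_fully_indecomposable[OF finite_V FK block]
  by (auto simp: fully_indecomposable_def)

lemma simple_path_to_out: "v \<in> V \<Longrightarrow> \<exists>Q. simple_path E Q v out"
  by (rule rtrancl_imp_simple_path[OF reaches_out])

lemma block_strongly_connected: "a \<in> R \<Longrightarrow> b \<in> R \<Longrightarrow> path_within E R a b"
  using H_entry_fully_indecomposable_connected[OF finite_subset[OF block_subset finite_V]
      out_notin_block FK_block_fully_indecomposable[OF finite_V FK block]]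
  by (simp add: path_within_def)

lemma transversal_preserves_block:
  "transversal (H_entry E I out) V \<sigma> \<Longrightarrow> r \<in> R \<Longrightarrow> \<sigma> r \<in> R"
  using FK_transversal_preserves_block[OF finite_V FK _ block] .

lemma input_path_subset:
  "i \<in> I \<Longrightarrow> simple_path E Q i out \<Longrightarrow> set Q \<subseteq> V"
  using simple_path_rtrancl downstream_in_V I_subset by (meson subsetD subsetI)

lemma input_path_avoids_block:
  assumes "i \<in> I" and Q: "simple_path E Q i out"
  shows "R \<inter> set Q = {}"
proof -
  let ?\<sigma> = "cycle_of_list (rev Q)"
  have Q': "Q \<noteq> []" "hd Q = i" "distinct Q"
    using Q by (auto simp: simple_path_iff_successively)
  have "transversal (H_entry E I out) V (?\<sigma> \<circ> cycle_of_list (rev []))"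
    using assms input_path_subset by (intro H_entry_transversal) auto
  then have \<sigma>: "transversal (H_entry E I out) V ?\<sigma>" by simp
  have "Q ! j \<notin> R" if "j < length Q" for j
    using that
  proof (induction j)
    case 0
    have "?\<sigma> (Q ! 0) = out"
      using cycle_of_list_rev_hd[OF Q'(3,1)] Q Q' by (simp add: hd_conv_nth simple_path_def)
    then show ?case using transversal_preserves_block[OF \<sigma>] out_notin_block by metis
  next
    case (Suc k)
    then have "?\<sigma> (Q ! Suc k) \<notin> R" using cycle_of_list_rev_Suc[OF Q'(3)] by simp
    then show ?case using transversal_preserves_block[OF \<sigma>] by metis
  qed
  then show ?thesis by (auto simp: in_set_conv_nth)
qed

lemma no_return_path_avoiding_input_path:
  assumes i: "i \<in> I" and Q: "simple_path E Q i out"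
    and xy: "(x, y) \<in> E" "x \<notin> R" "y \<in> R"
  shows "\<not> path_within E (compl_nodes V Q) y x"
proof
  assume "path_within E (compl_nodes V Q) y x"
  then obtain Z where Z: "simple_path E Z y x" "set Z \<subseteq> V - set Q"
    using path_within_imp_simple_path compl_nodes_def by metis
  then have Z': "Z \<noteq> []" "hd Z = y" "last Z = x" "distinct Z"
      "successively (\<lambda>x y. (x, y) \<in> E) Z"
    by (auto simp: simple_path_iff_successively)
  let ?\<sigma> = "cycle_of_list (rev Q) \<circ> cycle_of_list (rev Z)"
  have "transversal (H_entry E I out) V ?\<sigma>"
    using Z'(2,3) xy(1)
    by (intro H_entry_transversal[OF Q i input_path_subset[OF i Q] Z'(4,5) _ Z(2)]) simp
  then have "?\<sigma> y \<in> R" using transversal_preserves_block xy(3) by blast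
  moreover have "?\<sigma> y = x"
  proof -
    have "x \<in> set Z" and "y \<in> set Z"
      using Z'(1-3) last_in_set hd_in_set by blast+
    then show ?thesis
      using cycle_of_list_rev_hd[OF Z'(4,1)] Z'(2,3) Z(2) by (auto simp: id_outside_supp)
  qed
  ultimately show False using xy(2) by simp
qed

lemma block_reentry_edge: "\<exists>x y. (x, y) \<in> E \<and> x \<notin> R \<and> y \<in> R \<and> (y, x) \<in> E\<^sup>*"
proof (rule ccontr)
  assume no_reentry: "\<not> ?thesis"
  obtain v where v: "v \<in> R" using block_nonempty by blast
  then obtain i where i: "i \<in> I" "(i, v) \<in> E\<^sup>*"
    using reached_from_input[of v] block_subset by blast
  obtain Q where "simple_path E Q i out"
    using simple_path_to_out I_subset i(1) by blast
  then have "i \<in> set Q" unfolding simple_path_def by (metis hd_in_set)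
  then have "i \<notin> R" using input_path_avoids_block[OF i(1) \<open>simple_path E Q i out\<close>] by blast
  then obtain x y where xy: "(i, x) \<in> E\<^sup>*" "(x, y) \<in> E" "x \<notin> R" "y \<in> R"
    using rtrancl_crossing_edge[OF i(2) _ v] by blast
  obtain A where A: "simple_path E A i x" using rtrancl_imp_simple_path[OF xy(1)] by blast
  have "y \<in> V" using xy(2) E_subset by blast
  then obtain B where B: "simple_path E B y out" using simple_path_to_out by blast
  have no_return: "(y, x) \<notin> E\<^sup>*" using no_reentry xy(2-4) by blast
  have "a \<notin> set B" if "a \<in> set A" for a
  proof
    assume "a \<in> set B"
    then have "(y, a) \<in> E\<^sup>*" using simple_path_rtrancl[OF B] by blast
    moreover have "(a, x) \<in> E\<^sup>*" using simple_path_rtrancl[OF A that] by blast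
    ultimately show False using no_return rtrancl_trans[of y a E x] by blast
  qed
  then have "set A \<inter> set B = {}" by blast
  then have "simple_path E (A @ B) i out" using simple_path_append[OF A B xy(2)] by blast
  moreover have "y \<in> set (A @ B)" using B unfolding simple_path_def by (metis UnI2 hd_in_set set_append)
  ultimately show False using input_path_avoids_block[OF i(1)] xy(4) by blast
qed

lemma input_reaches_block:
  assumes i: "i \<in> I" and v: "v \<in> R"
  shows "(i, v) \<in> E\<^sup>*"
proof (rule ccontr)
  assume "(i, v) \<notin> E\<^sup>*"
  then have unreached: "(i, r) \<notin> E\<^sup>*" if "r \<in> R" for r
    using path_within_rtrancl[OF block_strongly_connected[OF that v]] rtrancl_trans[of i r E v]
    by blast
  obtain Q where Q: "simple_path E Q i out"
    using simple_path_to_out I_subset i by blast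
  obtain x y where xy: "(x, y) \<in> E" "x \<notin> R" "y \<in> R" "(y, x) \<in> E\<^sup>*"
    using block_reentry_edge by blast
  have x: "x \<in> V" using xy(1) E_subset by blast
  have "path_within E (compl_nodes V Q) y x"
  proof (rule path_within_upstream[OF xy(4)])
    fix z assume z: "(z, x) \<in> E\<^sup>*"
    have "(i, z) \<notin> E\<^sup>*"
      using unreached[OF xy(3)] rtrancl_trans[OF _ rtrancl_into_rtrancl[OF z xy(1)], of i] by blast
    then have "z \<notin> set Q" using simple_path_rtrancl[OF Q] by blast
    then show "z \<in> compl_nodes V Q" using upstream_in_V[OF z x] by (simp add: compl_nodes_def)
  qed
  then show False using no_return_path_avoiding_input_path[OF i Q xy(1-3)] by blast
qed

lemma block_subset_appendage_nodes: "R \<subseteq> appendage_nodes V E I out"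
proof
  fix v assume v: "v \<in> R"
  have "input_appendage E out i v" if i: "i \<in> I" for i
    using input_reaches_block[OF i v] input_path_avoids_block[OF i] v
    by (auto simp: input_appendage_def input_simple_def downstream_def)
  then show "v \<in> appendage_nodes V E I out"
    using v block_subset by (auto simp: appendage_nodes_def absolutely_appendage_def)
qed

lemma block_not_path_equivalent_outside:
  assumes i: "i \<in> I" and S: "simple_path E S i out"
    and a: "a \<in> R" and b: "b \<in> compl_nodes V S - R"
  shows "\<not> path_equivalent E (compl_nodes V S) a b"
proof
  let ?K = "compl_nodes V S"
  assume "path_equivalent E ?K a b"
  then have ab: "path_within E ?K a b" and ba: "(b, a) \<in> (E \<inter> ?K \<times> ?K)\<^sup>*"
    by (auto simp: path_equivalent_def path_within_def)
  have "b \<notin> R" using b by blast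
  then obtain x y where xy: "(b, x) \<in> (E \<inter> ?K \<times> ?K)\<^sup>*" "(x, y) \<in> E \<inter> ?K \<times> ?K" "x \<notin> R" "y \<in> R"
    using rtrancl_crossing_edge[OF ba _ a] by blast
  have "R \<subseteq> ?K"
    using input_path_avoids_block[OF i S] block_subset by (auto simp: compl_nodes_def)
  then have "path_within E ?K y a"
    by (rule path_within_mono[OF _ block_strongly_connected[OF xy(4) a]])
  moreover have "path_within E ?K b x" using xy(1,2) b by (auto simp: path_within_def)
  ultimately have "path_within E ?K y x" using ab path_within_trans by metis
  moreover have "(x, y) \<in> E" using xy(2) by blast
  ultimately show False using no_return_path_avoiding_input_path[OF i S _ xy(3,4)] by blast
qed

lemma block_path_component: "path_component E (appendage_nodes V E I out) R"
proof -
  let ?A = "appendage_nodes V E I out"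
  obtain a where a: "a \<in> R" using block_nonempty by blast
  obtain i where i: "i \<in> I" using I_nonempty by blast
  then obtain S where S: "simple_path E S i out" using simple_path_to_out I_subset by blast
  have "path_equivalent E ?A a b \<longleftrightarrow> b \<in> R" for b
  proof
    assume ab: "path_equivalent E ?A a b"
    have A_S: "?A \<subseteq> compl_nodes V S" by (rule appendage_nodes_subset_compl_nodes[OF i S])
    have "path_equivalent E (compl_nodes V S) a b" by (rule path_equivalent_mono[OF A_S ab])
    moreover have "b \<in> compl_nodes V S"
      using ab A_S by (auto simp: path_equivalent_def path_within_def)
    ultimately show "b \<in> R" using block_not_path_equivalent_outside[OF i S a] by blast
  next
    assume b: "b \<in> R"
    then show "path_equivalent E ?A a b"
      unfolding path_equivalent_def
      using path_within_mono[OF block_subset_appendage_nodes block_strongly_connected] a b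
      by blast
  qed
  then show ?thesis using a block_subset_appendage_nodes by (auto simp: path_component_def)
qed

end

theorem theorem3p13:
  fixes V :: "'v set" and E :: "('v \<times> 'v) set" and I :: "'v set" and out :: 'v
    and bs :: "('v set \<times> 'v set) list" and R C :: "'v set"
  assumes "core_network V E I out"
    and "FK_decomposition V (H_entry E I out) bs"
    and "(R, C) \<in> set bs"
    and "appendage_block E I out R C"
  shows "R \<subseteq> appendage_nodes V E I out \<and>
    (\<forall>i\<in>I. \<forall>S. simple_path E S i out \<longrightarrow>
           (\<forall>a\<in>R. \<forall>b\<in>compl_nodes V S - R. \<not> path_equivalent E (compl_nodes V S) a b)) \<and>
    path_component E (appendage_nodes V E I out) R"
proof -
  have "finite V" using assms(1) by (simp add: core_network_def network_def)
  then have "R = C" and "out \<notin> R" using appendage_block_square[OF _ assms(2-4)] by blast+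
  then interpret appendage_homeostasis_block V E I out bs R
    using assms(1-3) by unfold_locales simp_all
  show ?thesis
    using block_subset_appendage_nodes block_not_path_equivalent_outside block_path_component
    by blast
qed

end
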